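(* For any time warp $f$ and $n\in\omega\setminus\{0\}$: $f^{o}(n)=0\iff f(n)<\omega$; $f^{o}(n)=\omega\iff f(n)=\omega$; $f^{o}(\omega)=0\iff f(k)<\omega$ for all $k\in\omega$; $f^{o}(\omega)=\omega\iff f(k)=\omega$ for some $k\in\omega$.
   Context: Let $\overline{\omega}=\omega\cup\{\omega\}$ be the natural numbers with a top element $\omega$ adjoined, with its natural total order. A time warp is a monotone map $f\colon\overline{\omega}\to\overline{\omega}$ with $f(0)=0$ and $f(\omega)=\bigvee\{f(n)\mid n\in\omega\}$. The set $W$ of time warps is ordered pointwise and $fg:=f\circ g$; $\top$ maps every $p\ne0$ to $\omega$ and $0$ to $0$. The left residual $\backslash$ is the binary operation on $W$ with $g\le f\backslash h\iff fg\le h$ for all $f,g,h\in W$. Define $f^{o}:=\top\backslash f$. *)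

theory Defs
  imports Main "HOL-Library.Extended_Nat"
begin

text \<open>The ordered set omega-bar is modelled by enat (infinity = omega).\<close>

definition time_warp :: "(enat \<Rightarrow> enat) \<Rightarrow> bool" where
  "time_warp f \<longleftrightarrow> mono f \<and> f 0 = 0 \<and> f \<infinity> = (SUP n::nat. f (enat n))"

definition top_warp :: "enat \<Rightarrow> enat" where
  "top_warp p = (if p = 0 then 0 else \<infinity>)"

text \<open>Left residual: f\h is the greatest time warp g (pointwise order) with f o g <= h,
  i.e. the operation on W characterised by g <= f\h iff fg <= h.\<close>
definition resid :: "(enat \<Rightarrow> enat) \<Rightarrow> (enat \<Rightarrow> enat) \<Rightarrow> (enat \<Rightarrow> enat)" where
  "resid f h = (GREATEST g. time_warp g \<and> f \<circ> g \<le> h)"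

definition opp :: "(enat \<Rightarrow> enat) \<Rightarrow> (enat \<Rightarrow> enat)" where
  "opp f = resid top_warp f"

end

theory Submission
  imports Defs
begin

(* The inequality top g <= f says exactly that f is infinite wherever g is nonzero.
   Every time warp g with this property lies below the {0, omega}-valued warp that jumps
   to omega at the first finite k with f k = omega: at a finite p this is immediate, and
   g omega, being the supremum of the g k, can only be nonzero if some g k is.  Since f is
   monotone, that {0, omega}-valued warp has the property itself, so it is f^o. *)

definition inf_indicator :: "(enat \<Rightarrow> enat) \<Rightarrow> enat \<Rightarrow> enat" where
  "inf_indicator f p = (if \<exists>k::nat. enat k \<le> p \<and> f (enat k) = \<infinity> then \<infinity> else 0)"

lemma time_warp_inf_indicator:
  assumes "f 0 = 0"
  shows "time_warp (inf_indicator f)"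
proof -
  have "mono (inf_indicator f)"
    unfolding mono_def inf_indicator_def by (auto intro: order_trans)
  moreover have "inf_indicator f 0 = 0"
    using assms by (auto simp: inf_indicator_def zero_enat_def)
  moreover have "inf_indicator f \<infinity> = (SUP n::nat. inf_indicator f (enat n))"
  proof (cases "\<exists>k::nat. f (enat k) = \<infinity>")
    case True
    then obtain k where "inf_indicator f (enat k) = \<infinity>"
      by (force simp: inf_indicator_def)
    then have "(SUP n::nat. inf_indicator f (enat n)) = \<infinity>"
      by (metis SUP_upper UNIV_I enat_ord_simps(5))
    with True show ?thesis by (simp add: inf_indicator_def)
  next
    case False
    then have "inf_indicator f p = 0" for p
      by (simp add: inf_indicator_def)
    then show ?thesis by simp
  qed
  ultimately show ?thesis unfolding time_warp_def by blast
qed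

lemma top_warp_comp_le_iff: "top_warp \<circ> g \<le> f \<longleftrightarrow> (\<forall>p. g p \<noteq> 0 \<longrightarrow> f p = \<infinity>)"
  by (auto simp: le_fun_def top_warp_def)

lemma mono_infinity_upward:
  assumes "mono f" and "f p = (\<infinity>::enat)" and "p \<le> q"
  shows "f q = \<infinity>"
  using assms monoD by fastforce

lemma top_warp_comp_inf_indicator_le:
  assumes "mono f"
  shows "top_warp \<circ> inf_indicator f \<le> f"
  unfolding top_warp_comp_le_iff inf_indicator_def
  using mono_infinity_upward[OF assms] by auto

lemma time_warp_le_inf_indicator:
  assumes "time_warp g" and "top_warp \<circ> g \<le> f"
  shows "g \<le> inf_indicator f"
proof (rule le_funI)
  fix p
  have f_inf: "f q = \<infinity>" if "g q \<noteq> 0" for q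
    using assms(2) that by (simp add: top_warp_comp_le_iff)
  show "g p \<le> inf_indicator f p"
  proof (cases "g p = 0")
    case False
    obtain n where "enat n \<le> p" and "g (enat n) \<noteq> 0"
    proof (cases p)
      case (enat n)
      with False that show ?thesis by blast
    next
      case infinity
      with False assms(1) have "(SUP n::nat. g (enat n)) \<noteq> 0"
        by (simp add: time_warp_def)
      with infinity that show ?thesis by (metis SUP_bot_conv(2) bot_enat_def enat_ord_simps(3))
    qed
    then have "inf_indicator f p = \<infinity>"
      using f_inf by (auto simp: inf_indicator_def)
    then show ?thesis by simp
  qed simp
qed

lemma opp_eq_inf_indicator:
  assumes "time_warp f"
  shows "opp f = inf_indicator f"
  unfolding opp_def resid_def
proof (rule Greatest_equality)
  show "time_warp (inf_indicator f) \<and> top_warp \<circ> inf_indicator f \<le> f"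
    using assms time_warp_inf_indicator top_warp_comp_inf_indicator_le
    by (simp add: time_warp_def)
qed (use time_warp_le_inf_indicator in blast)

lemma inf_indicator_enat:
  assumes "mono f"
  shows "inf_indicator f (enat n) = (if f (enat n) = \<infinity> then \<infinity> else 0)"
  using mono_infinity_upward[OF assms] by (auto simp: inf_indicator_def)

lemma inf_indicator_infinity:
  "inf_indicator f \<infinity> = (if \<exists>k::nat. f (enat k) = \<infinity> then \<infinity> else 0)"
  by (simp add: inf_indicator_def)

theorem lemma2p5:
  fixes f :: "enat \<Rightarrow> enat" and n :: nat
  assumes "time_warp f" and "n \<noteq> 0"
  shows "(opp f (enat n) = 0 \<longleftrightarrow> f (enat n) < \<infinity>)
    \<and> (opp f (enat n) = \<infinity> \<longleftrightarrow> f (enat n) = \<infinity>)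
    \<and> (opp f \<infinity> = 0 \<longleftrightarrow> (\<forall>k::nat. f (enat k) < \<infinity>))
    \<and> (opp f \<infinity> = \<infinity> \<longleftrightarrow> (\<exists>k::nat. f (enat k) = \<infinity>))"
proof -
  have "mono f" using assms(1) by (simp add: time_warp_def)
  then show ?thesis
    using opp_eq_inf_indicator[OF assms(1)] inf_indicator_enat inf_indicator_infinity
    by simp
qed

end
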